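(* Let $\lambda_1,\lambda_2>0$. For $\nu\in(0,1)$ define, for $\theta\in\mathbb{R}$, $$\Psi^{(1)}_{\nu,\underline{\lambda}}(\theta):=\begin{cases}(\lambda_1(e^\theta-1))^{1/\nu} & \text{if } \theta\geq0,\\ (\lambda_2(e^{-\theta}-1))^{1/\nu} & \text{if } \theta<0,\end{cases}$$ $$\Psi^{(2)}_{\nu,\underline{\lambda}}(\theta):=\begin{cases}(\lambda_1(e^\theta-1)+\lambda_2(e^{-\theta}-1))^{1/\nu} & \text{if } \lambda_1(e^\theta-1)+\lambda_2(e^{-\theta}-1)\geq0,\\ 0 & \text{otherwise},\end{cases}$$ and for $k\in\{1,2\}$ let $I^{(k)}_{\mathrm{LD},\nu}(x):=\sup_{\theta\in\mathbb{R}}\{\theta x-\Psi^{(k)}_{\nu,\underline{\lambda}}(\theta)\}$. Let $\nu,\eta\in(0,1)$ with $\eta<\nu$. Then, for each $k\in\{1,2\}$, $I^{(k)}_{\mathrm{LD},\eta}(0)=I^{(k)}_{\mathrm{LD},\nu}(0)=0$ and there exists $\delta>0$ such that $I^{(k)}_{\mathrm{LD},\eta}(x)>I^{(k)}_{\mathrm{LD},\nu}(x)>0$ for all $x$ with $0<|x|<\delta$.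
   Context: In the paper, $I^{(1)}_{\mathrm{LD},\nu}$ and $I^{(2)}_{\mathrm{LD},\nu}$ are the large deviation rate functions (speed $t$) of $Y(t)/t$ and $Z(t)/t$ for the fractional Skellam processes of type 1 (with $\nu_1=\nu_2=\nu$) and type 2 respectively; the claim concerns only the explicitly defined functions above. *)

theory Defs
  imports "HOL-Analysis.Analysis"
begin

definition Psi1 :: "real \<Rightarrow> real \<Rightarrow> real \<Rightarrow> real \<Rightarrow> real" where
  "Psi1 l1 l2 \<nu> \<theta> =
     (if \<theta> \<ge> 0 then (l1 * (exp \<theta> - 1)) powr (1 / \<nu>)
      else (l2 * (exp (-\<theta>) - 1)) powr (1 / \<nu>))"

definition Psi2 :: "real \<Rightarrow> real \<Rightarrow> real \<Rightarrow> real \<Rightarrow> real" where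
  "Psi2 l1 l2 \<nu> \<theta> =
     (let a = l1 * (exp \<theta> - 1) + l2 * (exp (-\<theta>) - 1)
      in if a \<ge> 0 then a powr (1 / \<nu>) else 0)"

definition Psi :: "nat \<Rightarrow> real \<Rightarrow> real \<Rightarrow> real \<Rightarrow> real \<Rightarrow> real" where
  "Psi k l1 l2 \<nu> \<theta> = (if k = 1 then Psi1 l1 l2 \<nu> \<theta> else Psi2 l1 l2 \<nu> \<theta>)"

definition I_LD :: "nat \<Rightarrow> real \<Rightarrow> real \<Rightarrow> real \<Rightarrow> real \<Rightarrow> real" where
  "I_LD k l1 l2 \<nu> x = (SUP \<theta>::real. \<theta> * x - Psi k l1 l2 \<nu> \<theta>)"

end

theory Submission
  imports Defs "HOL-Real_Asymp.Real_Asymp"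
begin

text \<open>
  Both rate functions are Legendre transforms of \<open>B\<^sup>p\<close> with \<open>p = 1/\<nu> > 1\<close>, where \<open>B \<ge> 0\<close> is
  continuous, coercive, locally Lipschitz and vanishes at \<open>0\<close>. For \<open>|x|\<close> small the supremum
  \<open>sup\<^sub>\<theta> (\<theta> x - B(\<theta>)\<^sup>p)\<close> is attained at some \<open>t\<close> with \<open>B(t)\<^sup>p \<le> t x\<close>, which forces \<open>B(t) < 1\<close>.
  Moreover \<open>B(t) \<noteq> 0\<close>: near a zero of \<open>B\<close>, moving \<open>\<theta>\<close> by \<open>h\<close> in the direction of \<open>x\<close> gains
  \<open>h |x|\<close> but costs only \<open>O(h\<^sup>p) = o(h)\<close>. Hence \<open>B(t)\<^sup>q < B(t)\<^sup>p\<close> for \<open>q = 1/\<eta> > p\<close>, which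
  gives \<open>I\<^sub>\<eta>(x) > I\<^sub>\<nu>(x)\<close>; the same perturbation at \<open>\<theta> = 0\<close> gives \<open>I\<^sub>\<nu>(x) > 0\<close>.
\<close>

definition legendre :: "(real \<Rightarrow> real) \<Rightarrow> real \<Rightarrow> real" where
  "legendre f x = (SUP \<theta>. \<theta> * x - f \<theta>)"

lemma legendre_eq_maximum:
  assumes "\<And>\<theta>. \<theta> * x - f \<theta> \<le> t * x - f t"
  shows "legendre f x = t * x - f t"
  unfolding legendre_def by (rule cSup_eq_maximum) (use assms in auto)

lemma legendre_at_zero:
  assumes "\<And>\<theta>. 0 \<le> f \<theta>" and "f 0 = 0"
  shows "legendre f 0 = 0"
  using legendre_eq_maximum[of 0 f 0] assms by simp

lemma legendre_maximizer_exists: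
  fixes f :: "real \<Rightarrow> real"
  assumes cont: "continuous_on UNIV f" and "f 0 \<le> 0" and "0 \<le> R" and x: "\<bar>x\<bar> < 1"
    and coercive: "\<And>\<theta>. R \<le> \<bar>\<theta>\<bar> \<Longrightarrow> \<bar>\<theta>\<bar> \<le> f \<theta>"
  shows "\<exists>t. \<bar>t\<bar> \<le> R \<and> (\<forall>\<theta>. \<theta> * x - f \<theta> \<le> t * x - f t)"
proof -
  let ?g = "\<lambda>\<theta>. \<theta> * x - f \<theta>"
  have "continuous_on {-R..R} ?g"
    using continuous_on_subset[OF cont] by (intro continuous_intros) auto
  then have "\<exists>t\<in>{-R..R}. \<forall>\<theta>\<in>{-R..R}. ?g \<theta> \<le> ?g t"
    using \<open>0 \<le> R\<close> by (intro continuous_attains_sup) auto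
  then obtain t where t: "t \<in> {-R..R}" and max: "\<forall>\<theta>\<in>{-R..R}. ?g \<theta> \<le> ?g t"
    by blast
  have "0 \<le> ?g t"
    using max[rule_format, of 0] \<open>0 \<le> R\<close> \<open>f 0 \<le> 0\<close> by simp
  moreover have "?g \<theta> \<le> 0" if "R \<le> \<bar>\<theta>\<bar>" for \<theta>
  proof -
    have "\<theta> * x \<le> \<bar>\<theta>\<bar> * \<bar>x\<bar>"
      by (simp add: abs_mult[symmetric])
    also have "\<dots> \<le> \<bar>\<theta>\<bar>"
      using x by (simp add: mult_left_le)
    finally show ?thesis
      using coercive[OF that] by simp
  qed
  ultimately have "?g \<theta> \<le> ?g t" for \<theta>
    using max by (cases "R \<le> \<bar>\<theta>\<bar>") force+
  then show ?thesis
    using t by (intro exI[of _ t]) auto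
qed

lemma exists_gt_at_zero_of_lipschitz:
  fixes B :: "real \<Rightarrow> real"
  assumes p: "1 < p" and x: "x \<noteq> 0" and lip: "C-lipschitz_on (cball t 1) B"
    and "B t = 0" and nonneg: "\<And>s. 0 \<le> B s"
  shows "\<exists>\<theta>. t * x < \<theta> * x - B \<theta> powr p"
proof -
  have "\<forall>\<^sub>F h in at_right 0. 0 < h \<and> h \<le> 1 \<and> ((C + 1) * h) powr p < \<bar>x\<bar> * h"
    using p x lipschitz_on_nonneg[OF lip] by (intro eventually_conj; real_asymp)
  then obtain h where h: "0 < h" "h \<le> 1" "((C + 1) * h) powr p < \<bar>x\<bar> * h"
    using eventually_happens'[OF trivial_limit_at_right_real] by blast
  define \<theta> where "\<theta> = t + sgn x * h"
  have dist: "dist \<theta> t = h"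
    using x h by (simp add: \<theta>_def dist_real_def abs_mult)
  have "B \<theta> \<le> C * h"
    using lipschitz_onD[OF lip, of \<theta> t] dist h \<open>B t = 0\<close> nonneg[of \<theta>]
    by (simp add: dist_real_def dist_commute)
  also have "\<dots> \<le> (C + 1) * h"
    using h by simp
  finally have "B \<theta> powr p \<le> ((C + 1) * h) powr p"
    using nonneg[of \<theta>] p by (intro powr_mono2) auto
  also have "\<dots> < \<bar>x\<bar> * h"
    by (fact h(3))
  also have "\<bar>x\<bar> * h = \<theta> * x - t * x"
    by (simp add: \<theta>_def sgn_if algebra_simps)
  finally show ?thesis
    by (intro exI[of _ \<theta>]) simp
qed

lemma maximizer_not_zero:
  fixes B :: "real \<Rightarrow> real"
  assumes "1 < p" and "x \<noteq> 0" and "C-lipschitz_on (cball t 1) B" and "\<And>s. 0 \<le> B s"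
    and max: "\<And>\<theta>. \<theta> * x - B \<theta> powr p \<le> t * x - B t powr p"
  shows "B t \<noteq> 0"
proof
  assume "B t = 0"
  then obtain \<theta> where "t * x < \<theta> * x - B \<theta> powr p"
    using exists_gt_at_zero_of_lipschitz[OF assms(1-3) _ assms(4)] by blast
  with max[of \<theta>] \<open>B t = 0\<close> show False
    by simp
qed

lemma legendre_powr_less_legendre_powr:
  fixes B :: "real \<Rightarrow> real"
  assumes pq: "1 < p" "p < q" and "x \<noteq> 0" and lip: "C-lipschitz_on (cball t 1) B"
    and nonneg: "\<And>s. 0 \<le> B s" and "B t < 1"
    and t: "\<And>\<theta>. \<theta> * x - B \<theta> powr p \<le> t * x - B t powr p"
    and u: "\<And>\<theta>. \<theta> * x - B \<theta> powr q \<le> u * x - B u powr q"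
  shows "legendre (\<lambda>\<theta>. B \<theta> powr p) x < legendre (\<lambda>\<theta>. B \<theta> powr q) x"
proof -
  have "B t \<noteq> 0"
    using maximizer_not_zero[OF pq(1) \<open>x \<noteq> 0\<close> lip nonneg t] .
  then have "B t powr q < B t powr p"
    using pq nonneg[of t] \<open>B t < 1\<close> by (intro powr_less_mono') auto
  then have "t * x - B t powr p < u * x - B u powr q"
    using u[of t] by linarith
  then show ?thesis
    using legendre_eq_maximum[OF t] legendre_eq_maximum[OF u] by simp
qed

lemma legendre_powr_pos:
  fixes B :: "real \<Rightarrow> real"
  assumes "1 < p" and "x \<noteq> 0" and "C-lipschitz_on (cball 0 1) B" and "B 0 = 0"
    and "\<And>s. 0 \<le> B s"
    and t: "\<And>\<theta>. \<theta> * x - B \<theta> powr p \<le> t * x - B t powr p"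
  shows "0 < legendre (\<lambda>\<theta>. B \<theta> powr p) x"
proof -
  obtain \<theta> where "0 < \<theta> * x - B \<theta> powr p"
    using exists_gt_at_zero_of_lipschitz[OF assms(1-5)] by auto
  then show ?thesis
    using t[of \<theta>] legendre_eq_maximum[OF t] by simp
qed

lemma legendre_powr_exponent_strict_mono_near_zero:
  fixes B :: "real \<Rightarrow> real"
  assumes pq: "1 < p" "p < q"
    and cont: "continuous_on UNIV B" and nonneg: "\<And>s. 0 \<le> B s" and "B 0 = 0"
    and lip: "\<And>t. \<exists>C. C-lipschitz_on (cball t 1) B"
    and coercive: "\<forall>\<^sub>F \<theta> in at_infinity. \<bar>\<theta>\<bar> \<le> B \<theta>"
  shows "\<exists>\<delta>>0. \<forall>x. 0 < \<bar>x\<bar> \<and> \<bar>x\<bar> < \<delta> \<longrightarrow>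
           legendre (\<lambda>\<theta>. B \<theta> powr p) x < legendre (\<lambda>\<theta>. B \<theta> powr q) x \<and>
           0 < legendre (\<lambda>\<theta>. B \<theta> powr p) x"
proof -
  obtain R where R: "1 \<le> R" and growth: "\<And>\<theta>. R \<le> \<bar>\<theta>\<bar> \<Longrightarrow> \<bar>\<theta>\<bar> \<le> B \<theta>"
    using coercive unfolding eventually_at_infinity
    by (metis max.cobounded1 max.bounded_iff real_norm_def)
  have growth_powr: "\<bar>\<theta>\<bar> \<le> B \<theta> powr r" if "1 \<le> r" "R \<le> \<bar>\<theta>\<bar>" for r \<theta>
  proof -
    have "1 \<le> B \<theta>"
      using growth[OF that(2)] R that(2) by linarith
    then have "B \<theta> \<le> B \<theta> powr r"
      using powr_mono[OF that(1), of "B \<theta>"] by simp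
    then show ?thesis
      using growth[OF that(2)] by linarith
  qed
  have maximizer: "\<exists>t. \<bar>t\<bar> \<le> R \<and> (\<forall>\<theta>. \<theta> * x - B \<theta> powr r \<le> t * x - B t powr r)"
    if "1 \<le> r" "\<bar>x\<bar> < 1" for r x
    using that R \<open>B 0 = 0\<close> growth_powr
    by (intro legendre_maximizer_exists continuous_on_powr' cont) (auto simp: nonneg)
  show ?thesis
  proof (intro exI[of _ "1 / R"] conjI allI impI)
    fix x :: real
    assume "0 < \<bar>x\<bar> \<and> \<bar>x\<bar> < 1 / R"
    then have "x \<noteq> 0" and xR: "R * \<bar>x\<bar> < 1"
      using R by (auto simp: field_simps)
    then have "\<bar>x\<bar> < 1"
      using mult_right_mono[OF R abs_ge_zero, of x] by linarith
    obtain t where "\<bar>t\<bar> \<le> R" and t: "\<And>\<theta>. \<theta> * x - B \<theta> powr p \<le> t * x - B t powr p"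
      using maximizer[of p x] pq \<open>\<bar>x\<bar> < 1\<close> by auto
    obtain u where u: "\<And>\<theta>. \<theta> * x - B \<theta> powr q \<le> u * x - B u powr q"
      using maximizer[of q x] pq \<open>\<bar>x\<bar> < 1\<close> by auto
    have "B t powr p \<le> t * x"
      using t[of 0] \<open>B 0 = 0\<close> by simp
    also have "\<dots> \<le> \<bar>t\<bar> * \<bar>x\<bar>"
      by (simp add: abs_mult[symmetric])
    also have "\<dots> \<le> R * \<bar>x\<bar>"
      using \<open>\<bar>t\<bar> \<le> R\<close> by (simp add: mult_right_mono)
    finally have "B t powr p < 1"
      using xR by linarith
    then have "B t < 1"
      using ge_one_powr_ge_zero[of "B t" p] pq by force
    obtain C where "C-lipschitz_on (cball t 1) B"
      using lip by blast
    then show "legendre (\<lambda>\<theta>. B \<theta> powr p) x < legendre (\<lambda>\<theta>. B \<theta> powr q) x"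
      using legendre_powr_less_legendre_powr[OF pq \<open>x \<noteq> 0\<close> _ nonneg \<open>B t < 1\<close> t u] by blast
    obtain C0 where "C0-lipschitz_on (cball 0 1) B"
      using lip by blast
    then show "0 < legendre (\<lambda>\<theta>. B \<theta> powr p) x"
      using legendre_powr_pos[OF pq(1) \<open>x \<noteq> 0\<close> _ \<open>B 0 = 0\<close> nonneg t] by blast
  qed (use R in simp)
qed

definition Psi_base :: "nat \<Rightarrow> real \<Rightarrow> real \<Rightarrow> real \<Rightarrow> real" where
  "Psi_base k l1 l2 \<theta> =
     (if k = 1 then max (l1 * (exp \<theta> - 1)) (l2 * (exp (-\<theta>) - 1))
      else max (l1 * (exp \<theta> - 1) + l2 * (exp (-\<theta>) - 1)) 0)"

lemma Psi_eq_Psi_base_powr: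
  assumes "0 < l1" "0 < l2"
  shows "Psi k l1 l2 \<nu> \<theta> = Psi_base k l1 l2 \<theta> powr (1 / \<nu>)"
proof (cases "k = 1")
  case True
  have "Psi_base 1 l1 l2 \<theta> =
      (if 0 \<le> \<theta> then l1 * (exp \<theta> - 1) else l2 * (exp (-\<theta>) - 1))"
  proof (cases "0 \<le> \<theta>")
    case True
    then have "l2 * (exp (-\<theta>) - 1) \<le> 0" "0 \<le> l1 * (exp \<theta> - 1)"
      using assms by (simp_all add: mult_nonneg_nonpos)
    then show ?thesis
      using True by (simp add: Psi_base_def max_absorb1)
  next
    case False
    then have "l1 * (exp \<theta> - 1) \<le> 0" "0 \<le> l2 * (exp (-\<theta>) - 1)"
      using assms by (simp_all add: mult_nonneg_nonpos)
    then show ?thesis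
      using False by (simp add: Psi_base_def max_absorb2)
  qed
  then show ?thesis
    using True by (simp add: Psi_def Psi1_def)
next
  case False
  then show ?thesis
    by (auto simp: Psi_def Psi2_def Psi_base_def Let_def max_def)
qed

lemma Psi_base_nonneg:
  assumes "0 \<le> l1" "0 \<le> l2"
  shows "0 \<le> Psi_base k l1 l2 \<theta>"
proof -
  have "0 \<le> l1 * (exp \<theta> - 1) \<or> 0 \<le> l2 * (exp (-\<theta>) - 1)"
    using assms by (cases "0 \<le> \<theta>") auto
  then show ?thesis
    by (auto simp: Psi_base_def)
qed

lemma Psi_base_at_zero [simp]: "Psi_base k l1 l2 0 = 0"
  by (simp add: Psi_base_def)

lemma continuous_on_Psi_base: "continuous_on UNIV (Psi_base k l1 l2)"
  unfolding Psi_base_def by (cases "k = 1") (simp_all add: continuous_intros)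

lemma lipschitz_on_max:
  fixes f g :: "'a::metric_space \<Rightarrow> real"
  assumes f: "C-lipschitz_on U f" and g: "D-lipschitz_on U g"
  shows "(max C D)-lipschitz_on U (\<lambda>x. max (f x) (g x))"
proof (rule lipschitz_onI)
  fix x y
  assume "x \<in> U" "y \<in> U"
  have "dist (max (f x) (g x)) (max (f y) (g y)) \<le> max (dist (f x) (f y)) (dist (g x) (g y))"
    by (auto simp: dist_real_def max_def)
  also have "\<dots> \<le> max C D * dist x y"
    using lipschitz_onD[OF f \<open>x \<in> U\<close> \<open>y \<in> U\<close>] lipschitz_onD[OF g \<open>x \<in> U\<close> \<open>y \<in> U\<close>]
    by (simp add: max_mult_distrib_right max.coboundedI1 max.coboundedI2)
  finally show "dist (max (f x) (g x)) (max (f y) (g y)) \<le> max C D * dist x y" .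
qed (use lipschitz_on_nonneg[OF f] in auto)

lemma lipschitz_on_exp: "(exp b)-lipschitz_on {..b} exp"
proof (rule bounded_derivative_imp_lipschitz)
  fix x :: real
  assume "x \<in> {..b}"
  show "(exp has_derivative (*) (exp x)) (at x within {..b})"
    using DERIV_exp has_field_derivative_def has_field_derivative_at_within by blast
  show "onorm ((*) (exp x)) \<le> exp b"
    using \<open>x \<in> {..b}\<close> by (intro onorm_le) (simp add: abs_mult mult_right_mono)
qed auto

lemma Psi_base_locally_lipschitz: "\<exists>C. C-lipschitz_on (cball t 1) (Psi_base k l1 l2)"
proof -
  have ball_bound: "cball t 1 \<subseteq> {..\<bar>t\<bar> + 1}" "uminus ` cball t 1 \<subseteq> {..\<bar>t\<bar> + 1}"
    by (auto simp: dist_real_def)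
  have exp_lip: "(exp (\<bar>t\<bar> + 1))-lipschitz_on (cball t 1) exp"
    using ball_bound(1) by (rule lipschitz_on_subset[OF lipschitz_on_exp])
  have exp_minus_lip: "(exp (\<bar>t\<bar> + 1) * 1)-lipschitz_on (cball t 1) (\<lambda>\<theta>. exp (- \<theta>))"
    using ball_bound(2) by (intro lipschitz_on_compose2[OF lipschitz_on_minus[OF lipschitz_on_id]]
        lipschitz_on_subset[OF lipschitz_on_exp])
  have "\<exists>C. C-lipschitz_on (cball t 1) (\<lambda>\<theta>. max (l1 * (exp \<theta> - 1)) (l2 * (exp (-\<theta>) - 1)))"
    by (rule exI, (rule lipschitz_on_max lipschitz_on_add lipschitz_on_cmult_real lipschitz_on_diff
        lipschitz_on_constant exp_lip exp_minus_lip)+)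
  moreover have "\<exists>C. C-lipschitz_on (cball t 1) (\<lambda>\<theta>. max (l1 * (exp \<theta> - 1) + l2 * (exp (-\<theta>) - 1)) 0)"
    by (rule exI, (rule lipschitz_on_max lipschitz_on_add lipschitz_on_cmult_real lipschitz_on_diff
        lipschitz_on_constant exp_lip exp_minus_lip)+)
  ultimately show ?thesis
    by (cases "k = 1") (simp_all add: Psi_base_def[abs_def])
qed

lemma Psi_base_coercive:
  assumes "0 < l1" "0 < l2"
  shows "\<forall>\<^sub>F \<theta> in at_infinity. \<bar>\<theta>\<bar> \<le> Psi_base k l1 l2 \<theta>"
proof -
  have "\<forall>\<^sub>F \<theta> in at_top. 0 \<le> \<theta> \<and> \<theta> \<le> l1 * (exp \<theta> - 1) \<and>
      \<theta> \<le> l1 * (exp \<theta> - 1) + l2 * (exp (-\<theta>) - 1)"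
    using assms by (intro eventually_conj; real_asymp)
  moreover have "\<forall>\<^sub>F \<theta> in at_bot. \<theta> \<le> 0 \<and> -\<theta> \<le> l2 * (exp (-\<theta>) - 1) \<and>
      -\<theta> \<le> l1 * (exp \<theta> - 1) + l2 * (exp (-\<theta>) - 1)"
    using assms by (intro eventually_conj; real_asymp)
  ultimately show ?thesis
    unfolding at_infinity_eq_at_top_bot eventually_sup
    by (auto elim!: eventually_mono simp: Psi_base_def)
qed

theorem proposition5p5:
  fixes l1 l2 \<nu> \<eta> :: real and k :: nat
  assumes "l1 > 0" and "l2 > 0"
    and "0 < \<eta>" and "\<eta> < \<nu>" and "\<nu> < 1"
    and "k \<in> {1, 2}"
  shows "I_LD k l1 l2 \<eta> 0 = 0 \<and> I_LD k l1 l2 \<nu> 0 = 0 \<and>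
         (\<exists>\<delta>>0. \<forall>x::real. 0 < \<bar>x\<bar> \<and> \<bar>x\<bar> < \<delta> \<longrightarrow>
            I_LD k l1 l2 \<eta> x > I_LD k l1 l2 \<nu> x \<and> I_LD k l1 l2 \<nu> x > 0)"
proof -
  \<comment> \<open>\<open>Psi\<close> reads every \<open>k \<noteq> 1\<close> as type 2.\<close>
  have I_LD_eq: "I_LD k l1 l2 \<mu> = legendre (\<lambda>\<theta>. Psi_base k l1 l2 \<theta> powr (1 / \<mu>))" for \<mu>
    using Psi_eq_Psi_base_powr[OF assms(1,2)] by (simp add: I_LD_def legendre_def fun_eq_iff)
  have "1 < 1 / \<nu>" "1 / \<nu> < 1 / \<eta>"
    using assms(3-5) by (auto simp: field_simps)
  then show ?thesis
    unfolding I_LD_eq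
    using legendre_powr_exponent_strict_mono_near_zero[OF _ _ continuous_on_Psi_base Psi_base_nonneg
          Psi_base_at_zero Psi_base_locally_lipschitz Psi_base_coercive]
      legendre_at_zero assms(1,2)
    by simp
qed

end
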